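(* Let $\alpha\in(1/3,1)$ and $v\in\mathcal{C}^\alpha(\mathbb{R}^d)$. Let $\varepsilon>0$ with $(2+\varepsilon)\alpha>1$ and let $F\in C^{2+\varepsilon}(\mathbb{R}^d,\mathbb{R})$. Then for all $t\in[0,1]$ the limit $\lim_{N\to\infty}\int_0^tS_N(\mathrm{D}F(v))(s)\,d(S_Nv)(s)$ exists and \[ F(v(t))-F(v(0))=\lim_{N\to\infty}\int_0^tS_N(\mathrm{D}F(v))(s)\,d(S_Nv)(s). \] (No assumption on the Lévy area of $v$ is needed.)
   Context: Index set: pairs $(p,m)$ with either $p=-1,m=0$, or $p\in\mathbb{N}=\{0,1,2,\dots\}$ and $0\le m\le 2^p$. For $p\in\mathbb{N}$, $1\le m\le 2^p$ set $t^0_{pm}=(m-1)2^{-p}$, $t^1_{pm}=(2m-1)2^{-p-1}$, $t^2_{pm}=m2^{-p}$. Rescaled Haar functions: for $p\in\mathbb{N}$, $1\le m\le 2^p$, $\chi_{pm}=2^p$ on $[t^0_{pm},t^1_{pm})$, $=-2^p$ on $[t^1_{pm},t^2_{pm})$, $=0$ elsewhere; $\chi_{00}\equiv1$; $\chi_{p0}\equiv0$ for $p\ge1$. Rescaled Schauder functions: $\varphi_{pm}(t)=\int_0^t\chi_{pm}(s)\,ds$ for $p\in\mathbb{N}$, and $\varphi_{-10}\equiv1$. For continuous $f:[0,1]\to E$ ($E$ a finite-dimensional normed space), coefficients: $f_{-10}=f(0)$, $f_{00}=f(1)-f(0)$, $f_{p0}=0$ for $p\ge1$, $f_{pm}=2f(t^1_{pm})-f(t^0_{pm})-f(t^2_{pm})$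 for $p\in\mathbb{N},m\ge1$. $\Delta_pf=\sum_{m=0}^{2^p}f_{pm}\varphi_{pm}$, $S_Nf=\sum_{p=-1}^N\Delta_pf$ (the piecewise linear interpolation of $f$ at the points $k2^{-N-1}$). For $\alpha>0$, $\|f\|_\alpha:=\sup_{p,m}2^{p\alpha}|f_{pm}|$ and $\mathcal{C}^\alpha(E):=\{f\in C([0,1],E):\|f\|_\alpha<\infty\}$. For Lipschitz $g$, $\int_0^tf\,dg:=\int_0^tf(s)g'(s)\,ds$. $C^{2+\varepsilon}$: twice continuously differentiable with locally $\varepsilon$-Hölder second derivative (for $\varepsilon\in(0,1)$). $\mathrm{D}F$ is the gradient, viewed as an element of $L(\mathbb{R}^d,\mathbb{R})$. *)

theory Defs
  imports "HOL-Analysis.Analysis"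
begin

definition tpt0 :: "nat \<Rightarrow> nat \<Rightarrow> real" where
  "tpt0 p m = (real m - 1) / 2 ^ p"
definition tpt1 :: "nat \<Rightarrow> nat \<Rightarrow> real" where
  "tpt1 p m = (2 * real m - 1) / 2 ^ (p + 1)"
definition tpt2 :: "nat \<Rightarrow> nat \<Rightarrow> real" where
  "tpt2 p m = real m / 2 ^ p"

definition haar :: "nat \<Rightarrow> nat \<Rightarrow> real \<Rightarrow> real" where
  "haar p m t =
     (if m = 0 then (if p = 0 then 1 else 0)
      else if tpt0 p m \<le> t \<and> t < tpt1 p m then 2 ^ p
      else if tpt1 p m \<le> t \<and> t < tpt2 p m then - (2 ^ p)
      else 0)"

definition schauder :: "int \<Rightarrow> nat \<Rightarrow> real \<Rightarrow> real" where
  "schauder p m t = (if p = -1 then 1 else integral {0..t} (haar (nat p) m))"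

definition scoeff :: "(real \<Rightarrow> 'b::real_normed_vector) \<Rightarrow> int \<Rightarrow> nat \<Rightarrow> 'b" where
  "scoeff f p m =
     (if p = -1 then f 0
      else if m = 0 then (if p = 0 then f 1 - f 0 else 0)
      else 2 *\<^sub>R f (tpt1 (nat p) m) - f (tpt0 (nat p) m) - f (tpt2 (nat p) m))"

definition valid_index :: "int \<Rightarrow> nat \<Rightarrow> bool" where
  "valid_index p m = ((p = -1 \<and> m = 0) \<or> (p \<ge> 0 \<and> m \<le> 2 ^ nat p))"

definition Delta :: "int \<Rightarrow> (real \<Rightarrow> 'b::real_normed_vector) \<Rightarrow> real \<Rightarrow> 'b" where
  "Delta p f t = (if p = -1 then schauder (-1) 0 t *\<^sub>R scoeff f (-1) 0
                  else (\<Sum>m = 0..2 ^ nat p. schauder p m t *\<^sub>R scoeff f p m))"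

definition SN :: "nat \<Rightarrow> (real \<Rightarrow> 'b::real_normed_vector) \<Rightarrow> real \<Rightarrow> 'b" where
  "SN N f t = (\<Sum>p \<in> {-1..int N}. Delta p f t)"

definition holderC :: "real \<Rightarrow> (real \<Rightarrow> 'b::real_normed_vector) \<Rightarrow> bool" where
  "holderC \<alpha> f = (continuous_on {0..1} f \<and>
     (\<exists>C. \<forall>p m. valid_index p m \<longrightarrow> 2 powr (real_of_int p * \<alpha>) * norm (scoeff f p m) \<le> C))"

text \<open>Integral against a Lipschitz path: int_0^t f dg = int_0^t f(s) g'(s) ds,
  where the product f(s) g'(s) is application of the linear map f(s) to g'(s).\<close>
definition int_dg :: "(real \<Rightarrow> ('a::euclidean_space \<Rightarrow>\<^sub>L real)) \<Rightarrow> (real \<Rightarrow> 'a) \<Rightarrow> real \<Rightarrow> real" where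
  "int_dg f g t = integral {0..t} (\<lambda>s. blinfun_apply (f s) (vector_derivative g (at s)))"

definition C2eps :: "real \<Rightarrow> ('a::euclidean_space \<Rightarrow> real) \<Rightarrow> ('a \<Rightarrow> ('a \<Rightarrow>\<^sub>L real)) \<Rightarrow> bool" where
  "C2eps \<epsilon> F DF = ((\<forall>x. (F has_derivative blinfun_apply (DF x)) (at x)) \<and>
     (\<exists>D2F :: 'a \<Rightarrow> ('a \<Rightarrow>\<^sub>L ('a \<Rightarrow>\<^sub>L real)).
        (\<forall>x. (DF has_derivative blinfun_apply (D2F x)) (at x)) \<and>
        continuous_on UNIV D2F \<and>
        (\<forall>x. \<exists>r>0. \<exists>C. \<forall>y\<in>ball x r. \<forall>z\<in>ball x r.
            norm (D2F y - D2F z) \<le> C * dist y z powr \<epsilon>)))"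

end

theory Submission
  imports Defs
begin

text \<open>S_N v and S_N (DF v) interpolate linearly on the grid k 2^-(N+1), so on a grid cell [a, b]
  the integral of S_N (DF v) d(S_N v) is the trapezoidal rule (DF (v a) + DF (v b)) (v b - v a) / 2
  for F (v b) - F (v a). Since the second derivative of F is \<epsilon>-Hoelder, this is exact up to
  O(|v b - v a|^(2+\<epsilon>)) = O(2^(-N(2+\<epsilon>)\<alpha>)), and summed over the 2^(N+1) cells the error
  tends to zero because (2+\<epsilon>)\<alpha> > 1. The trapezoidal rule is symmetric in a and b, which is why
  no Levy area appears.\<close>

lemma has_vector_derivative_locally_affine:
  fixes f :: "real \<Rightarrow> 'b::real_normed_vector"
  assumes "open U" "x \<in> U" "\<And>y. y \<in> U \<Longrightarrow> f y = a + y *\<^sub>R c"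
  shows "(f has_vector_derivative c) (at x)"
proof -
  have "((\<lambda>y. a + y *\<^sub>R c) has_vector_derivative c) (at x)"
    by (auto intro!: derivative_eq_intros)
  then show ?thesis
    by (rule has_vector_derivative_transform_within_open[OF _ assms(1,2)]) (simp add: assms(3))
qed

lemma tpt_ordered:
  assumes "m \<ge> 1"
  shows "0 \<le> tpt0 p m" "tpt0 p m < tpt1 p m" "tpt1 p m < tpt2 p m"
    "tpt0 p m + tpt2 p m = 2 * tpt1 p m"
  using assms by (auto simp: tpt0_def tpt1_def tpt2_def divide_simps)

definition tent :: "nat \<Rightarrow> nat \<Rightarrow> real \<Rightarrow> real" where
  "tent p m s = max 0 (min (2^p * (s - tpt0 p m)) (2^p * (tpt2 p m - s)))"

lemma tent_outside: "s \<le> tpt0 p m \<or> tpt2 p m \<le> s \<Longrightarrow> tent p m s = 0"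
proof -
  assume "s \<le> tpt0 p m \<or> tpt2 p m \<le> s"
  then have "(2::real)^p * (s - tpt0 p m) \<le> 0 \<or> (2::real)^p * (tpt2 p m - s) \<le> 0"
    by (auto intro: mult_nonneg_nonpos)
  then show ?thesis unfolding tent_def by linarith
qed

lemma tent_left:
  "m \<ge> 1 \<Longrightarrow> tpt0 p m \<le> s \<Longrightarrow> s \<le> tpt1 p m \<Longrightarrow> tent p m s = 2^p * (s - tpt0 p m)"
  using tpt_ordered[of m p] by (auto simp: tent_def)

lemma tent_right:
  "m \<ge> 1 \<Longrightarrow> tpt1 p m \<le> s \<Longrightarrow> s \<le> tpt2 p m \<Longrightarrow> tent p m s = 2^p * (tpt2 p m - s)"
  using tpt_ordered[of m p] by (auto simp: tent_def)

lemma tent_has_vector_derivative_haar: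
  assumes m: "m \<ge> 1" and x: "x \<notin> {tpt0 p m, tpt1 p m, tpt2 p m}"
  shows "(tent p m has_vector_derivative haar p m x) (at x)"
proof -
  note tpt = tpt_ordered[OF m, of p]
  consider "x < tpt0 p m" | "tpt0 p m < x" "x < tpt1 p m" | "tpt1 p m < x" "x < tpt2 p m"
    | "tpt2 p m < x"
    using x tpt by fastforce
  then show ?thesis
  proof cases
    case 1
    then show ?thesis using m tpt tent_outside[of _ p m]
      by (intro has_vector_derivative_locally_affine[where U="{..<tpt0 p m}" and a=0])
         (auto simp: haar_def)
  next
    case 2
    then show ?thesis using m tpt tent_left[OF m, of p]
      by (intro has_vector_derivative_locally_affine[where U="{tpt0 p m<..<tpt1 p m}"
          and a="- (2^p * tpt0 p m)"]) (auto simp: haar_def algebra_simps)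
  next
    case 3
    then show ?thesis using m tpt tent_right[OF m, of p]
      by (intro has_vector_derivative_locally_affine[where U="{tpt1 p m<..<tpt2 p m}"
          and a="2^p * tpt2 p m"]) (auto simp: haar_def algebra_simps)
  next
    case 4
    then show ?thesis using m tpt tent_outside[of _ p m]
      by (intro has_vector_derivative_locally_affine[where U="{tpt2 p m<..}" and a=0])
         (auto simp: haar_def)
  qed
qed

lemma schauder_eq_tent:
  assumes m: "m \<ge> 1"
  shows "schauder (int p) m s = tent p m s"
proof (cases "s < 0")
  case True
  then show ?thesis using tent_outside tpt_ordered[OF m, of p] by (force simp: schauder_def)
next
  case False
  have "continuous_on {0..s} (tent p m)"
    unfolding tent_def by (intro continuous_intros)
  then have "(haar p m has_integral (tent p m s - tent p m 0)) {0..s}"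
    using False tent_has_vector_derivative_haar[OF m]
    by (intro fundamental_theorem_of_calculus_strong[of "{tpt0 p m, tpt1 p m, tpt2 p m}"]) auto
  moreover have "tent p m 0 = 0" using tent_outside tpt_ordered[OF m] by force
  ultimately show ?thesis by (simp add: schauder_def integral_unique)
qed

lemma SN_0: "SN 0 f s = f 0 + Delta 0 f s"
proof -
  have "{-1..int 0} = {-1, 0::int}" by auto
  then show ?thesis by (simp add: SN_def Delta_def schauder_def scoeff_def)
qed

lemma SN_Suc: "SN (Suc N) f s = SN N f s + Delta (int (Suc N)) f s"
proof -
  have "{-1..int (Suc N)} = insert (int (Suc N)) {-1..int N}" by auto
  then show ?thesis by (simp add: SN_def add.commute)
qed

lemma Delta_0:
  assumes "0 \<le> s"
  shows "Delta 0 f s = s *\<^sub>R (f 1 - f 0) + tent 0 1 s *\<^sub>R (2 *\<^sub>R f (1/2) - f 0 - f 1)"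
proof -
  have "haar 0 0 = (\<lambda>_. 1)" by (simp add: haar_def fun_eq_iff)
  then have "schauder 0 0 s = s" using assms by (simp add: schauder_def)
  moreover have "schauder 0 1 s = tent 0 1 s" using schauder_eq_tent[of 1 0 s] by simp
  moreover have "{0..(1::nat)} = {0,1}" by auto
  ultimately show ?thesis
    by (simp add: Delta_def scoeff_def tpt0_def tpt1_def tpt2_def)
qed

lemma Delta_on_dyadic_interval:
  assumes p: "p \<ge> 1" and j: "j < 2^p" and s: "real j / 2^p \<le> s" "s \<le> real (j+1) / 2^p"
  shows "Delta (int p) f s = tent p (j+1) s *\<^sub>R scoeff f (int p) (j+1)"
proof -
  have vanish: "schauder (int p) m s *\<^sub>R scoeff f (int p) m = 0" if "m \<in> {0..2^p} - {j+1}" for m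
  proof (cases "m = 0")
    case True
    then show ?thesis using p by (simp add: scoeff_def)
  next
    case False
    have "real m \<le> real j \<or> real (j+1) \<le> real m - 1" using that by auto
    then have "real m / 2^p \<le> real j / 2^p \<or> real (j+1) / 2^p \<le> (real m - 1) / 2^p"
      by (auto intro: divide_right_mono)
    then have "s \<le> tpt0 p m \<or> tpt2 p m \<le> s"
      using s unfolding tpt0_def tpt2_def by linarith
    then show ?thesis using False schauder_eq_tent[of m p s] tent_outside by simp
  qed
  have "j+1 \<in> {0..2^p}" using j by simp
  then have "Delta (int p) f s = schauder (int p) (j+1) s *\<^sub>R scoeff f (int p) (j+1)
      + (\<Sum>m\<in>{0..2^p} - {j+1}. schauder (int p) m s *\<^sub>R scoeff f (int p) m)"
    unfolding Delta_def by (simp add: sum.remove)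
  also have "(\<Sum>m\<in>{0..2^p} - {j+1}. schauder (int p) m s *\<^sub>R scoeff f (int p) m) = 0"
    using vanish by (rule sum.neutral[OF ballI])
  finally
  show ?thesis using schauder_eq_tent[of "j+1" p s] by simp
qed

definition dyadic :: "nat \<Rightarrow> nat \<Rightarrow> real" where
  "dyadic N k = real k / 2^(N+1)"

lemma dyadic_mono: "a \<le> b \<Longrightarrow> dyadic N a \<le> dyadic N b"
  by (simp add: dyadic_def divide_right_mono)

lemma dyadic_nonneg: "0 \<le> dyadic N k"
  by (simp add: dyadic_def)

lemma dyadic_Suc: "dyadic N (Suc k) = dyadic N k + 1 / 2^(N+1)"
  by (simp add: dyadic_def add_divide_distrib)

lemma dyadic_in_unit_interval:
  assumes "k \<le> 2^(N+1)"
  shows "dyadic N k \<in> {0..1}"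
proof -
  have "real k \<le> 2^(N+1)" using assms by (metis of_nat_le_iff of_nat_numeral of_nat_power)
  then show ?thesis by (simp add: dyadic_def)
qed


lemma midpoint_refinement_left:
  fixes a b c :: "'b::real_vector"
  shows "a + t *\<^sub>R (c - a) + t *\<^sub>R (2 *\<^sub>R b - a - c) = a + (2*t) *\<^sub>R (b - a)"
  by (simp add: algebra_simps scaleR_2 flip: scaleR_add_left)

lemma midpoint_refinement_right:
  fixes a b c :: "'b::real_vector"
  shows "a + t *\<^sub>R (c - a) + (1 - t) *\<^sub>R (2 *\<^sub>R b - a - c) = b + (2*t - 1) *\<^sub>R (c - b)"
  by (simp add: algebra_simps scaleR_2 flip: scaleR_add_left)

text \<open>Adding the level N+1 term turns the chord over a level-N cell into the two chords
  through its midpoint.\<close>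
lemma SN_eq_interpolation:
  "k < 2^(N+1) \<Longrightarrow> dyadic N k \<le> s \<Longrightarrow> s \<le> dyadic N (Suc k) \<Longrightarrow>
   SN N f s = f (dyadic N k) + ((s - dyadic N k) * 2^(N+1)) *\<^sub>R (f (dyadic N (Suc k)) - f (dyadic N k))"
proof (induction N arbitrary: k s)
  case 0
  have s: "0 \<le> s" using 0 dyadic_nonneg[of 0 k] by linarith
  have tpt: "tpt0 0 1 = 0" "tpt1 0 1 = 1/2" "tpt2 0 1 = 1" by (simp_all add: tpt0_def tpt1_def tpt2_def)
  have SN: "SN 0 f s = f 0 + s *\<^sub>R (f 1 - f 0) + tent 0 1 s *\<^sub>R (2 *\<^sub>R f (1/2) - f 0 - f 1)"
    using SN_0[of f s] Delta_0[OF s, of f] by (simp add: add.assoc)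
  have "k = 0 \<or> k = 1" using 0 by auto
  then show ?case
  proof
    assume k: "k = 0"
    have "tent 0 1 s = s" using tent_left[of 1 0 s] tpt s 0 k by (simp add: dyadic_def)
    then show ?case
      using SN midpoint_refinement_left[of "f 0" s "f 1" "f (1/2)"] k by (simp add: dyadic_def mult.commute)
  next
    assume k: "k = 1"
    have "tent 0 1 s = 1 - s" using tent_right[of 1 0 s] tpt s 0 k by (simp add: dyadic_def)
    then have "SN 0 f s = f (1/2) + (2 * s - 1) *\<^sub>R (f 1 - f (1/2))"
      using SN midpoint_refinement_right[of "f 0" s "f 1" "f (1/2)"] by simp
    then show ?case using k by (simp add: dyadic_def algebra_simps)
  qed
next
  case (Suc N)
  define j where "j = k div 2"
  have kj: "k = 2*j \<or> k = 2*j+1" unfolding j_def by presburger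
  have j: "j < 2^(N+1)" using Suc.prems(1) unfolding j_def by simp
  have two_pow: "(2::real)^(Suc N + 1) = 2 * 2^(N+1)" by simp
  define a where "a = dyadic N j"
  define m where "m = dyadic (Suc N) (2*j+1)"
  define b where "b = dyadic N (Suc j)"
  have a_eq: "dyadic (Suc N) (2*j) = a" and b_eq: "dyadic (Suc N) (2*j+2) = b"
    unfolding a_def b_def dyadic_def two_pow by (simp_all add: field_simps)
  have tpt: "tpt0 (Suc N) (Suc j) = a" "tpt1 (Suc N) (Suc j) = m" "tpt2 (Suc N) (Suc j) = b"
    by (simp_all add: tpt0_def tpt1_def tpt2_def a_def b_def m_def dyadic_def)
  have a: "a \<le> s" using dyadic_mono[of "2*j" k "Suc N"] kj Suc.prems(2) a_eq by auto
  have b: "s \<le> b" using dyadic_mono[of "Suc k" "2*j+2" "Suc N"] kj Suc.prems(3) b_eq by auto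
  have IH: "SN N f s = f a + ((s - a) * 2^(N+1)) *\<^sub>R (f b - f a)"
    using Suc.IH[OF j] a b unfolding a_def b_def by simp
  have "Delta (int (Suc N)) f s = tent (Suc N) (j+1) s *\<^sub>R scoeff f (int (Suc N)) (j+1)"
    using Delta_on_dyadic_interval[of "Suc N" j s f] j a b unfolding a_def b_def dyadic_def by simp
  also have "scoeff f (int (Suc N)) (j+1) = 2 *\<^sub>R f m - f a - f b"
    using tpt by (simp only: scoeff_def nat_int) simp
  finally have Delta: "Delta (int (Suc N)) f s = tent (Suc N) (j+1) s *\<^sub>R (2 *\<^sub>R f m - f a - f b)" .
  define t where "t = (s - a) * 2^(N+1)"
  from kj show ?case
  proof
    assume k: "k = 2*j"
    have "s \<le> m" using Suc.prems(3) k unfolding m_def by simp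
    then have "tent (Suc N) (j+1) s = t"
      using tent_left[of "j+1" "Suc N" s] a tpt unfolding t_def by (simp add: mult.commute)
    then have "SN (Suc N) f s = f a + (2*t) *\<^sub>R (f m - f a)"
      using SN_Suc[of N f s] IH Delta midpoint_refinement_left[of "f a" t "f b" "f m"]
      unfolding t_def by simp
    moreover have "2*t = (s - a) * 2^(Suc N + 1)" unfolding t_def two_pow by simp
    ultimately show ?case using k a_eq m_def by simp
  next
    assume k: "k = 2*j+1"
    have "m \<le> s" using Suc.prems(2) k unfolding m_def by simp
    then have "tent (Suc N) (j+1) s = 2^(Suc N) * (b - s)"
      using tent_right[of "j+1" "Suc N" s] b tpt by simp
    also have "\<dots> = 1 - t" unfolding t_def a_def b_def dyadic_def by (simp add: field_simps)
    finally have "SN (Suc N) f s = f m + (2*t - 1) *\<^sub>R (f b - f m)"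
      using SN_Suc[of N f s] IH Delta midpoint_refinement_right[of "f a" t "f b" "f m"]
      unfolding t_def by simp
    moreover have "2*t - 1 = (s - m) * 2^(Suc N + 1)"
      unfolding t_def m_def a_def two_pow by (simp add: dyadic_def field_simps)
    ultimately show ?case using k b_eq m_def by (simp add: numeral_2_eq_2)
  qed
qed


lemma holderC_scoeff_bound:
  assumes "holderC \<alpha> v"
  obtains C where "C \<ge> 0" "\<And>p m. m \<le> 2^p \<Longrightarrow> norm (scoeff v (int p) m) \<le> C * (2 powr (-\<alpha>))^p"
proof -
  obtain C where C: "\<And>p m. valid_index p m \<Longrightarrow> 2 powr (real_of_int p * \<alpha>) * norm (scoeff v p m) \<le> C"
    using assms unfolding holderC_def by blast
  have "C \<ge> 0" using C[of 0 0] by (simp add: valid_index_def) (metis norm_ge_zero order.trans)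
  moreover have "norm (scoeff v (int p) m) \<le> C * (2 powr (-\<alpha>))^p" if "m \<le> 2^p" for p m
  proof -
    have "(2 powr (-\<alpha>))^p * 2 powr (real p * \<alpha>) = 1"
      by (simp add: powr_power[of 2, simplified] flip: powr_add)
    then have "norm (scoeff v (int p) m) = (2 powr (-\<alpha>))^p * (2 powr (real p * \<alpha>) * norm (scoeff v (int p) m))"
      by (simp add: mult.assoc[symmetric])
    also have "\<dots> \<le> (2 powr (-\<alpha>))^p * C"
      using C[of "int p" m] that by (intro mult_left_mono) (auto simp: valid_index_def)
    finally show ?thesis by (simp add: mult.commute)
  qed
  ultimately show ?thesis using that by blast
qed

text \<open>An increment at level p+1 is half the parent increment plus or minus half a Schauder
  coefficient of level p; the bound K q^p propagates because q = 2 powr (-\<alpha>) > 1/2.\<close>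
lemma holderC_dyadic_increments:
  fixes v :: "real \<Rightarrow> 'b::real_normed_vector"
  assumes "0 < \<alpha>" "\<alpha> < 1" "holderC \<alpha> v"
  obtains K where "K \<ge> 0"
    "\<And>p j. j < 2^p \<Longrightarrow> norm (v (real (Suc j) / 2^p) - v (real j / 2^p)) \<le> K * (2 powr (-\<alpha>))^p"
proof -
  define q where "q = (2::real) powr (-\<alpha>)"
  obtain C where C0: "C \<ge> 0" and C: "\<And>p m. m \<le> 2^p \<Longrightarrow> norm (scoeff v (int p) m) \<le> C * q^p"
    using holderC_scoeff_bound[OF assms(3)] unfolding q_def by blast
  have q1: "q < 1" unfolding q_def using assms(1) by (simp add: powr_less_one)
  have "2 powr (-1) < q" unfolding q_def using assms(2) by (intro powr_less_mono) auto
  then have q_half: "1/2 < q" by (simp add: powr_minus)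
  define K where "K = C / (2*q - 1)"
  have K0: "K \<ge> 0" unfolding K_def using C0 q_half by simp
  have KC: "K + C = 2 * (K * q)" unfolding K_def using q_half by (simp add: field_simps)
  have "K * (2*q - 1) \<le> K * 1" using K0 q1 by (intro mult_left_mono) auto
  then have "C \<le> K" using KC by (simp add: algebra_simps)
  have "norm (v (real (Suc j) / 2^p) - v (real j / 2^p)) \<le> K * q^p" if "j < 2^p" for p j
    using that
  proof (induction p arbitrary: j)
    case 0
    then show ?case using C[of 0 0] \<open>C \<le> K\<close> by (simp add: scoeff_def)
  next
    case (Suc p)
    define i where "i = j div 2"
    have ij: "j = 2*i \<or> j = 2*i+1" unfolding i_def by presburger
    have i: "i < 2^p" using Suc.prems unfolding i_def by simp
    define a where "a = v (real i / 2^p)"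
    define b where "b = v (real (2*i+1) / 2^Suc p)"
    define c where "c = v (real (Suc i) / 2^p)"
    have "scoeff v (int p) (Suc i) = 2 *\<^sub>R b - a - c"
      unfolding scoeff_def a_def b_def c_def tpt0_def tpt1_def tpt2_def by simp
    then have coeff: "norm (2 *\<^sub>R b - a - c) \<le> C * q^p" using C[of "Suc i" p] i by simp
    have parent: "norm (c - a) \<le> K * q^p" using Suc.IH[OF i] unfolding a_def c_def by simp
    have half: "(K * q^p + C * q^p) / 2 = K * q^Suc p"
      by (simp add: KC flip: distrib_right)
    have two_pow: "(2::real)^Suc p = 2 * 2^p" by simp
    from ij show ?case
    proof
      assume j: "j = 2*i"
      have "v (real (Suc j) / 2^Suc p) - v (real j / 2^Suc p) = (1/2) *\<^sub>R ((c - a) + (2 *\<^sub>R b - a - c))"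
        unfolding a_def b_def j two_pow by (simp add: algebra_simps flip: scaleR_add_left)
      also have "norm \<dots> \<le> (K * q^p + C * q^p) / 2"
        using norm_triangle_le[OF add_mono[OF parent coeff]] by simp
      finally show ?thesis using half by simp
    next
      assume j: "j = 2*i+1"
      have "real (Suc j) / 2^Suc p = real (Suc i) / 2^p" unfolding j two_pow by (simp add: field_simps)
      then have "v (real (Suc j) / 2^Suc p) - v (real j / 2^Suc p) = (1/2) *\<^sub>R ((c - a) - (2 *\<^sub>R b - a - c))"
        unfolding b_def c_def j by (simp add: algebra_simps flip: scaleR_add_left)
      also have "norm \<dots> \<le> (K * q^p + C * q^p) / 2"
        using norm_triangle_le_diff[OF add_mono[OF parent coeff]] by simp
      finally show ?thesis using half by simp
    qed
  qed
  then show ?thesis using that[OF K0] unfolding q_def by blast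
qed


lemma locally_holder_imp_uniformly_holder_on_compact:
  fixes D :: "'a::metric_space \<Rightarrow> 'b::real_normed_vector"
  assumes S: "compact S"
    and loc: "\<And>x. \<exists>r>0. \<exists>C. \<forall>y\<in>ball x r. \<forall>z\<in>ball x r. norm (D y - D z) \<le> C * dist y z powr \<epsilon>"
  obtains e C where "e > 0" "C \<ge> 0"
    "\<And>y z. y \<in> S \<Longrightarrow> dist y z < e \<Longrightarrow> norm (D y - D z) \<le> C * dist y z powr \<epsilon>"
proof -
  obtain r C where r: "\<And>x. r x > 0"
    and C: "\<And>x y z. y \<in> ball x (r x) \<Longrightarrow> z \<in> ball x (r x) \<Longrightarrow> norm (D y - D z) \<le> C x * dist y z powr \<epsilon>"
    using loc by metis
  have cover: "S \<subseteq> (\<Union>x\<in>S. ball x (r x))" using r by force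
  obtain T where T: "T \<subseteq> S" "finite T" "S \<subseteq> (\<Union>x\<in>T. ball x (r x))"
    using compactE_image[OF S _ cover] by blast
  obtain e where e: "e > 0" "\<And>y. y \<in> S \<Longrightarrow> \<exists>B \<in> (\<lambda>x. ball x (r x)) ` T. ball y e \<subseteq> B"
    using Heine_Borel_lemma[OF S, of "(\<lambda>x. ball x (r x)) ` T"] T(3) by auto
  define CT where "CT = (\<Sum>x\<in>T. \<bar>C x\<bar>)"
  show ?thesis
  proof (rule that[OF e(1)])
    show "CT \<ge> 0" unfolding CT_def by (simp add: sum_nonneg)
    fix y z assume y: "y \<in> S" and yz: "dist y z < e"
    obtain x where x: "x \<in> T" "ball y e \<subseteq> ball x (r x)" using e(2)[OF y] by blast
    have "y \<in> ball y e" "z \<in> ball y e" using e(1) yz by auto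
    then have "y \<in> ball x (r x)" "z \<in> ball x (r x)" using x(2) by blast+
    then have "norm (D y - D z) \<le> C x * dist y z powr \<epsilon>" by (rule C)
    also have "\<dots> \<le> CT * dist y z powr \<epsilon>"
    proof (rule mult_right_mono)
      have "C x \<le> \<bar>C x\<bar>" by simp
      also have "\<dots> \<le> CT" unfolding CT_def using x(1) T(2) by (intro member_le_sum) auto
      finally show "C x \<le> CT" .
    qed simp
    finally show "norm (D y - D z) \<le> CT * dist y z powr \<epsilon>" .
  qed
qed

lemma trapezoid_rule_error:
  fixes f \<phi> \<phi>' :: "real \<Rightarrow> real"
  assumes df: "\<And>r. (f has_real_derivative \<phi> r) (at r)"
    and d\<phi>: "\<And>r. (\<phi> has_real_derivative \<phi>' r) (at r)"
    and B: "\<And>r. 0 \<le> r \<Longrightarrow> r \<le> 1 \<Longrightarrow> \<bar>\<phi>' r - \<phi>' 0\<bar> \<le> B"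
  shows "\<bar>f 1 - f 0 - (\<phi> 0 + \<phi> 1) / 2\<bar> \<le> 2 * B"
proof -
  define \<psi> where "\<psi> r = \<phi> r - \<phi> 0 - r * \<phi>' 0" for r
  have d\<psi>: "(\<psi> has_real_derivative \<phi>' r - \<phi>' 0) (at r)" for r
    unfolding \<psi>_def by (auto intro!: derivative_eq_intros d\<phi>)
  have \<psi>: "\<bar>\<psi> r\<bar> \<le> B" if r: "0 \<le> r" "r \<le> 1" for r
  proof (cases "r = 0")
    case True
    then show ?thesis using B[of 0] by (simp add: \<psi>_def)
  next
    case False
    then have "0 < r" using r by simp
    then obtain z where z: "0 < z" "z < r" "\<psi> r - \<psi> 0 = (r - 0) * (\<phi>' z - \<phi>' 0)"
      using MVT2[of 0 r \<psi> "\<lambda>r. \<phi>' r - \<phi>' 0"] d\<psi> by auto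
    then have "\<bar>\<psi> r\<bar> = r * \<bar>\<phi>' z - \<phi>' 0\<bar>" using \<open>0 < r\<close> by (simp add: \<psi>_def abs_mult)
    also have "\<dots> \<le> 1 * B" using B[of z] z r by (intro mult_mono) auto
    finally show ?thesis by simp
  qed
  define w where "w r = f r - f 0 - r * \<phi> 0 - r^2 / 2 * \<phi>' 0" for r
  have dw: "(w has_real_derivative \<psi> r) (at r)" for r
    unfolding w_def \<psi>_def by (auto intro!: derivative_eq_intros df simp: power2_eq_square)
  obtain z where z: "0 < z" "z < 1" "w 1 - w 0 = (1 - 0) * \<psi> z"
    using MVT2[of 0 1 w \<psi>] dw by auto
  have a: "\<bar>f 1 - f 0 - \<phi> 0 - \<phi>' 0 / 2\<bar> \<le> B" using z \<psi>[of z] by (simp add: w_def)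
  have b: "\<bar>\<phi> 1 - \<phi> 0 - \<phi>' 0\<bar> \<le> B" using \<psi>[of 1] by (simp add: \<psi>_def)
  have "f 1 - f 0 - (\<phi> 0 + \<phi> 1) / 2 = (f 1 - f 0 - \<phi> 0 - \<phi>' 0 / 2) - (\<phi> 1 - \<phi> 0 - \<phi>' 0) / 2"
    by (simp add: field_simps)
  then show ?thesis using abs_le_D1[OF a] abs_le_D2[OF a] abs_le_D1[OF b] abs_le_D2[OF b]
    by (intro abs_leI) argo+
qed

lemma trapezoid_rule_error_segment:
  fixes F :: "'a::real_normed_vector \<Rightarrow> real" and DF :: "'a \<Rightarrow> ('a \<Rightarrow>\<^sub>L real)"
    and D2F :: "'a \<Rightarrow> ('a \<Rightarrow>\<^sub>L ('a \<Rightarrow>\<^sub>L real))"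
  assumes dF: "\<And>x. (F has_derivative blinfun_apply (DF x)) (at x)"
    and dDF: "\<And>x. (DF has_derivative blinfun_apply (D2F x)) (at x)"
    and B: "\<And>r. 0 \<le> r \<Longrightarrow> r \<le> 1 \<Longrightarrow> norm (D2F (x + r *\<^sub>R d) - D2F x) \<le> B"
  shows "\<bar>F (x + d) - F x - (DF x d + DF (x + d) d) / 2\<bar> \<le> 2 * B * norm d ^ 2"
proof -
  have line: "((\<lambda>r. x + r *\<^sub>R d) has_derivative (\<lambda>h. h *\<^sub>R d)) (at r)" for r
    by (auto intro!: derivative_eq_intros)
  have df: "((\<lambda>r. F (x + r *\<^sub>R d)) has_real_derivative DF (x + r *\<^sub>R d) d) (at r)" for r
    using has_derivative_compose[OF line dF]
    by (simp add: has_field_derivative_def blinfun.scaleR_right mult.commute[of _ "DF _ d"])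
  have d\<phi>: "((\<lambda>r. DF (x + r *\<^sub>R d) d) has_real_derivative D2F (x + r *\<^sub>R d) d d) (at r)" for r
  proof -
    have "((\<lambda>r. DF (x + r *\<^sub>R d) d) has_derivative (\<lambda>h. D2F (x + r *\<^sub>R d) (h *\<^sub>R d) d)) (at r)"
      by (rule bounded_linear.has_derivative[OF blinfun.bounded_linear_left
            has_derivative_compose[OF line dDF]])
    moreover have "(\<lambda>h. D2F (x + r *\<^sub>R d) (h *\<^sub>R d) d) = (*) (D2F (x + r *\<^sub>R d) d d)"
      by (auto simp: fun_eq_iff blinfun.scaleR_right blinfun.scaleR_left)
    ultimately show ?thesis unfolding has_field_derivative_def by simp
  qed
  have "\<bar>D2F (x + r *\<^sub>R d) d d - D2F (x + 0 *\<^sub>R d) d d\<bar> \<le> B * norm d ^ 2"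
    if "0 \<le> r" "r \<le> 1" for r
  proof -
    let ?L = "D2F (x + r *\<^sub>R d) - D2F x"
    have "\<bar>?L d d\<bar> \<le> norm (?L d) * norm d" using norm_blinfun[of "?L d" d] by simp
    also have "\<dots> \<le> norm ?L * norm d * norm d" using norm_blinfun[of ?L d] by (intro mult_right_mono) auto
    also have "\<dots> \<le> B * norm d * norm d" using B[OF that] by (intro mult_right_mono) auto
    finally show ?thesis by (simp add: blinfun.diff_left power2_eq_square mult.assoc)
  qed
  from trapezoid_rule_error[OF df d\<phi> this] show ?thesis by simp
qed


definition SN_cell_integral ::
    "nat \<Rightarrow> (real \<Rightarrow> ('a::real_normed_vector \<Rightarrow>\<^sub>L real)) \<Rightarrow> (real \<Rightarrow> 'a) \<Rightarrow> nat \<Rightarrow> real \<Rightarrow> real" where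
  "SN_cell_integral N g v k c =
     ((c - dyadic N k) * 2^(N+1)) * g (dyadic N k) (v (dyadic N (Suc k)) - v (dyadic N k))
     + ((c - dyadic N k) * 2^(N+1))^2 / 2
       * (g (dyadic N (Suc k)) - g (dyadic N k)) (v (dyadic N (Suc k)) - v (dyadic N k))"

lemma has_integral_SN_cell:
  fixes v :: "real \<Rightarrow> 'a::euclidean_space" and g :: "real \<Rightarrow> ('a \<Rightarrow>\<^sub>L real)"
  assumes k: "k < 2^(N+1)" and c: "dyadic N k \<le> c" "c \<le> dyadic N (Suc k)"
  shows "((\<lambda>s. SN N g s (vector_derivative (SN N v) (at s))) has_integral SN_cell_integral N g v k c)
    {dyadic N k..c}"
proof -
  define a where "a = dyadic N k"
  define b where "b = dyadic N (Suc k)"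
  define n :: real where "n = 2^(N+1)"
  define \<Delta>v where "\<Delta>v = v b - v a"
  define \<Phi> where "\<Phi> s = SN_cell_integral N g v k s" for s
  have \<Phi>: "\<Phi> s = ((s - a) * n) * g a \<Delta>v + ((s - a) * n)^2 / 2 * (g b - g a) \<Delta>v" for s
    by (simp add: \<Phi>_def SN_cell_integral_def a_def b_def n_def \<Delta>v_def)
  have "((\<lambda>s. SN N g s (vector_derivative (SN N v) (at s))) has_integral (\<Phi> c - \<Phi> a)) {a..c}"
  proof (rule fundamental_theorem_of_calculus_strong[of "{a, b}"])
    show "a \<le> c" using c unfolding a_def by simp
    show "continuous_on {a..c} \<Phi>" unfolding \<Phi> by (intro continuous_intros) auto
    fix x assume "x \<in> {a..c} - {a, b}"
    then have x: "a < x" "x < b" using c unfolding b_def by auto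
    have SNg: "SN N g x = g a + ((x - a) * n) *\<^sub>R (g b - g a)"
      using SN_eq_interpolation[OF k, of x g] x unfolding a_def b_def n_def by simp
    have "SN N v y = (v a - (a * n) *\<^sub>R \<Delta>v) + y *\<^sub>R (n *\<^sub>R \<Delta>v)" if "y \<in> {a<..<b}" for y
      using SN_eq_interpolation[OF k, of y v] that
      unfolding a_def b_def n_def \<Delta>v_def by (simp add: algebra_simps)
    then have "(SN N v has_vector_derivative (n *\<^sub>R \<Delta>v)) (at x)"
      using x by (intro has_vector_derivative_locally_affine[of "{a<..<b}"]) auto
    then have "vector_derivative (SN N v) (at x) = n *\<^sub>R \<Delta>v"
      by (rule vector_derivative_at)
    then have "SN N g x (vector_derivative (SN N v) (at x)) = n * g a \<Delta>v + ((x - a) * n) * n * (g b - g a) \<Delta>v"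
      unfolding SNg
      by (simp only: blinfun.add_left blinfun.scaleR_left blinfun.scaleR_right real_scaleR_def)
         (simp add: algebra_simps)
    moreover have "(\<Phi> has_real_derivative (n * g a \<Delta>v + ((x - a) * n) * n * (g b - g a) \<Delta>v)) (at x)"
      unfolding \<Phi> by (auto intro!: derivative_eq_intros simp: power2_eq_square)
    ultimately show "(\<Phi> has_vector_derivative SN N g x (vector_derivative (SN N v) (at x))) (at x)"
      by (simp add: has_real_derivative_iff_has_vector_derivative)
  qed simp
  then show ?thesis using \<Phi>[of a] by (simp add: \<Phi>_def a_def)
qed

lemma has_integral_SN_cells:
  fixes v :: "real \<Rightarrow> 'a::euclidean_space" and g :: "real \<Rightarrow> ('a \<Rightarrow>\<^sub>L real)"
  assumes "K \<le> 2^(N+1)"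
  shows "((\<lambda>s. SN N g s (vector_derivative (SN N v) (at s))) has_integral
     (\<Sum>k<K. SN_cell_integral N g v k (dyadic N (Suc k)))) {0..dyadic N K}"
  using assms
proof (induction K)
  case 0
  show ?case by (simp add: dyadic_def has_integral_refl(2))
next
  case (Suc K)
  then have K: "K < 2^(N+1)" by simp
  show ?case
    using has_integral_combine[OF dyadic_nonneg dyadic_mono Suc.IH
        has_integral_SN_cell[OF K dyadic_mono order.refl]] K
    by (simp add: add.commute)
qed

lemma dyadic_floor:
  assumes t: "t \<in> {0..1}" and K: "K = nat \<lfloor>t * 2^(N+1)\<rfloor>"
  shows "K \<le> 2^(N+1)" "dyadic N K \<le> t" "t \<le> dyadic N (Suc K)"
    "K = 2^(N+1) \<Longrightarrow> t = dyadic N K"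
proof -
  define x where "x = t * 2^(N+1)"
  have x: "0 \<le> x" "x \<le> 2^(N+1)" using t unfolding x_def by auto
  have "real K = of_int \<lfloor>x\<rfloor>" unfolding K x_def using x(1) x_def by simp
  then have Kx: "real K \<le> x" "x < real K + 1" by linarith+
  then have "real K \<le> 2^(N+1)" using x by linarith
  then show "K \<le> 2^(N+1)" by (metis of_nat_le_iff of_nat_numeral of_nat_power)
  show "dyadic N K \<le> t" "t \<le> dyadic N (Suc K)"
    using Kx unfolding dyadic_def x_def by (simp_all add: divide_le_eq le_divide_eq)
  show "t = dyadic N K" if "K = 2^(N+1)" using that Kx x t unfolding dyadic_def x_def by simp
qed

text \<open>For t = 1 the index K is 2^(N+1), outside the grid, but the last term vanishes there
  because its cell is degenerate.\<close>
lemma int_dg_SN_eq_sum_cells: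
  fixes v :: "real \<Rightarrow> 'a::euclidean_space" and g :: "real \<Rightarrow> ('a \<Rightarrow>\<^sub>L real)"
  assumes t: "t \<in> {0..1}" and K: "K = nat \<lfloor>t * 2^(N+1)\<rfloor>"
  shows "int_dg (SN N g) (SN N v) t
    = (\<Sum>k<K. SN_cell_integral N g v k (dyadic N (Suc k))) + SN_cell_integral N g v K t"
proof (cases "K < 2^(N+1)")
  case True
  note floor = dyadic_floor[OF assms]
  show ?thesis unfolding int_dg_def
    using has_integral_combine[OF dyadic_nonneg floor(2) has_integral_SN_cells[OF floor(1), of g v]
        has_integral_SN_cell[OF True floor(2,3), of g v]]
    by (simp add: integral_unique)
next
  case False
  then have "t = dyadic N K" using dyadic_floor[OF assms] by simp
  then show ?thesis unfolding int_dg_def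
    using has_integral_SN_cells[of K N g v] dyadic_floor[OF assms]
    by (simp add: integral_unique SN_cell_integral_def)
qed

lemma SN_cell_integral_full_cell:
  "SN_cell_integral N g v k (dyadic N (Suc k))
     = (g (dyadic N k) (v (dyadic N (Suc k)) - v (dyadic N k))
        + g (dyadic N (Suc k)) (v (dyadic N (Suc k)) - v (dyadic N k))) / 2"
proof -
  have "(dyadic N (Suc k) - dyadic N k) * 2^(N+1) = 1" by (simp add: dyadic_Suc)
  then show ?thesis by (simp add: SN_cell_integral_def blinfun.diff_left field_simps)
qed

lemma SN_cell_integral_bound:
  assumes c: "dyadic N k \<le> c" "c \<le> dyadic N (Suc k)"
    and G: "norm (g (dyadic N k)) \<le> G" "norm (g (dyadic N (Suc k))) \<le> G"
  shows "\<bar>SN_cell_integral N g v k c\<bar> \<le> 2 * G * norm (v (dyadic N (Suc k)) - v (dyadic N k))"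
proof -
  define \<tau> where "\<tau> = (c - dyadic N k) * 2^(N+1)"
  define \<Delta>v where "\<Delta>v = v (dyadic N (Suc k)) - v (dyadic N k)"
  have \<tau>: "0 \<le> \<tau>" "\<tau> \<le> 1" using c unfolding \<tau>_def by (auto simp: dyadic_Suc field_simps)
  have "\<bar>g (dyadic N k) \<Delta>v\<bar> \<le> G * norm \<Delta>v"
    using norm_blinfun[of "g (dyadic N k)" \<Delta>v] G(1) by (simp add: mult_right_mono order_trans)
  moreover have "\<bar>(g (dyadic N (Suc k)) - g (dyadic N k)) \<Delta>v\<bar> \<le> 2 * G * norm \<Delta>v"
  proof -
    have "norm (g (dyadic N (Suc k)) - g (dyadic N k)) \<le> 2 * G"
      using norm_triangle_ineq4[of "g (dyadic N (Suc k))" "g (dyadic N k)"] G by simp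
    then show ?thesis
      using norm_blinfun[of "g (dyadic N (Suc k)) - g (dyadic N k)" \<Delta>v]
      by (simp add: mult_right_mono order_trans)
  qed
  moreover have "\<tau>^2 \<le> 1" using \<tau> by (simp add: power_le_one)
  ultimately have "\<bar>\<tau> * g (dyadic N k) \<Delta>v\<bar> \<le> G * norm \<Delta>v"
      "\<bar>\<tau>^2 / 2 * (g (dyadic N (Suc k)) - g (dyadic N k)) \<Delta>v\<bar> \<le> G * norm \<Delta>v"
    using \<tau> mult_left_le_one_le[of "\<bar>g (dyadic N k) \<Delta>v\<bar>" \<tau>]
      mult_left_le_one_le[of "\<bar>(g (dyadic N (Suc k)) - g (dyadic N k)) \<Delta>v\<bar>" "\<tau>^2"]
    by (auto simp: abs_mult)
  then show ?thesis
    unfolding SN_cell_integral_def \<tau>_def[symmetric] \<Delta>v_def[symmetric] by (simp add: abs_triangle_ineq order_trans)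
qed


lemma SN_cell_trapezoid_error:
  fixes v :: "real \<Rightarrow> 'a::euclidean_space" and F :: "'a \<Rightarrow> real"
    and DF :: "'a \<Rightarrow> ('a \<Rightarrow>\<^sub>L real)" and D2F :: "'a \<Rightarrow> ('a \<Rightarrow>\<^sub>L ('a \<Rightarrow>\<^sub>L real))"
  assumes dF: "\<And>x. (F has_derivative blinfun_apply (DF x)) (at x)"
    and dDF: "\<And>x. (DF has_derivative blinfun_apply (D2F x)) (at x)"
    and holder: "\<And>z. dist (v (dyadic N k)) z < e \<Longrightarrow> norm (D2F (v (dyadic N k)) - D2F z) \<le> C * dist (v (dyadic N k)) z powr \<epsilon>"
    and "C \<ge> 0" "\<epsilon> \<ge> 0"
    and incr: "norm (v (dyadic N (Suc k)) - v (dyadic N k)) \<le> \<delta>" and "\<delta> < e"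
  shows "\<bar>SN_cell_integral N (\<lambda>s. DF (v s)) v k (dyadic N (Suc k))
           - (F (v (dyadic N (Suc k))) - F (v (dyadic N k)))\<bar> \<le> 2 * C * \<delta> powr \<epsilon> * \<delta>^2"
proof -
  define x where "x = v (dyadic N k)"
  define d where "d = v (dyadic N (Suc k)) - v (dyadic N k)"
  have "norm (D2F (x + r *\<^sub>R d) - D2F x) \<le> C * \<delta> powr \<epsilon>" if r: "0 \<le> r" "r \<le> 1" for r
  proof -
    have "dist x (x + r *\<^sub>R d) = r * norm d" using r by (simp add: dist_norm)
    also have "\<dots> \<le> \<delta>" using r incr mult_left_le_one_le[of "norm d" r] unfolding d_def by simp
    finally have dist: "dist x (x + r *\<^sub>R d) \<le> \<delta>" .
    then have "norm (D2F x - D2F (x + r *\<^sub>R d)) \<le> C * dist x (x + r *\<^sub>R d) powr \<epsilon>"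
      using holder \<open>\<delta> < e\<close> unfolding x_def by simp
    also have "\<dots> \<le> C * \<delta> powr \<epsilon>"
      using dist assms(4,5) by (intro mult_left_mono powr_mono2) auto
    finally show ?thesis by (simp add: norm_minus_commute)
  qed
  from trapezoid_rule_error_segment[OF dF dDF this]
  have "\<bar>F (x + d) - F x - (DF x d + DF (x + d) d) / 2\<bar> \<le> 2 * (C * \<delta> powr \<epsilon>) * norm d ^ 2" .
  also have "\<dots> \<le> 2 * (C * \<delta> powr \<epsilon>) * \<delta> ^ 2"
    using incr assms(4) unfolding d_def by (intro mult_left_mono power_mono) auto
  finally show ?thesis
    unfolding SN_cell_integral_full_cell x_def d_def by (simp add: abs_minus_commute mult.assoc)
qed

lemma SN_change_of_variables_error:
  fixes v :: "real \<Rightarrow> 'a::euclidean_space" and F :: "'a \<Rightarrow> real"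
    and DF :: "'a \<Rightarrow> ('a \<Rightarrow>\<^sub>L real)" and D2F :: "'a \<Rightarrow> ('a \<Rightarrow>\<^sub>L ('a \<Rightarrow>\<^sub>L real))"
  assumes dF: "\<And>x. (F has_derivative blinfun_apply (DF x)) (at x)"
    and dDF: "\<And>x. (DF has_derivative blinfun_apply (D2F x)) (at x)"
    and holder: "\<And>y z. y \<in> v ` {0..1} \<Longrightarrow> dist y z < e \<Longrightarrow> norm (D2F y - D2F z) \<le> C * dist y z powr \<epsilon>"
    and "C \<ge> 0" "\<epsilon> \<ge> 0"
    and G: "\<And>s. s \<in> {0..1} \<Longrightarrow> norm (DF (v s)) \<le> G"
    and incr: "\<And>k. k < 2^(N+1) \<Longrightarrow> norm (v (dyadic N (Suc k)) - v (dyadic N k)) \<le> \<delta>"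
    and "\<delta> < e"
    and t: "t \<in> {0..1}" and K: "K = nat \<lfloor>t * 2^(N+1)\<rfloor>"
  shows "\<bar>int_dg (SN N (\<lambda>s. DF (v s))) (SN N v) t - (F (v t) - F (v 0))\<bar>
    \<le> 2^(N+1) * (2 * C * \<delta> powr \<epsilon> * \<delta>^2) + 2 * G * \<delta> + \<bar>F (v t) - F (v (dyadic N K))\<bar>"
proof -
  note floor = dyadic_floor[OF t K]
  let ?I = "SN_cell_integral N (\<lambda>s. DF (v s)) v"
  let ?E = "\<lambda>k. ?I k (dyadic N (Suc k)) - (F (v (dyadic N (Suc k))) - F (v (dyadic N k)))"
  have "G \<ge> 0" using G[of 0] by (meson atLeastAtMost_iff norm_ge_zero order_trans zero_le_one order_refl)
  have "\<delta> \<ge> 0" using incr[of 0] by (meson norm_ge_zero order_trans zero_less_numeral zero_less_power)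
  have "(\<Sum>k<K. F (v (dyadic N (Suc k))) - F (v (dyadic N k))) = F (v (dyadic N K)) - F (v 0)"
    by (subst sum_lessThan_telescope) (simp add: dyadic_def)
  then have split: "int_dg (SN N (\<lambda>s. DF (v s))) (SN N v) t - (F (v t) - F (v 0))
      = (\<Sum>k<K. ?E k) + ?I K t - (F (v t) - F (v (dyadic N K)))"
    using int_dg_SN_eq_sum_cells[OF t K] by (simp add: sum_subtractf)
  have "\<bar>\<Sum>k<K. ?E k\<bar> \<le> (\<Sum>k<K. 2 * C * \<delta> powr \<epsilon> * \<delta>^2)"
  proof (rule order_trans[OF sum_abs sum_mono])
    fix k assume "k \<in> {..<K}"
    then have k: "k < 2^(N+1)" using floor(1) by simp
    have "dyadic N k \<in> {0..1}" using k by (intro dyadic_in_unit_interval) simp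
    then show "\<bar>?E k\<bar> \<le> 2 * C * \<delta> powr \<epsilon> * \<delta>^2"
      using holder assms(4,5) incr[OF k] \<open>\<delta> < e\<close>
      by (intro SN_cell_trapezoid_error[OF dF dDF]) auto
  qed
  also have "\<dots> \<le> 2^(N+1) * (2 * C * \<delta> powr \<epsilon> * \<delta>^2)"
  proof -
    have "real K \<le> 2^(N+1)" using floor(1) by (metis of_nat_le_iff of_nat_numeral of_nat_power)
    moreover have "0 \<le> 2 * C * \<delta> powr \<epsilon> * \<delta>^2" using assms(4) by simp
    ultimately show ?thesis by (simp only: sum_constant card_lessThan) (rule mult_right_mono)
  qed
  finally have full: "\<bar>\<Sum>k<K. ?E k\<bar> \<le> 2^(N+1) * (2 * C * \<delta> powr \<epsilon> * \<delta>^2)" .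
  have partial: "\<bar>?I K t\<bar> \<le> 2 * G * \<delta>"
  proof (cases "K < 2^(N+1)")
    case True
    have "\<bar>?I K t\<bar> \<le> 2 * G * norm (v (dyadic N (Suc K)) - v (dyadic N K))"
      using floor True G dyadic_in_unit_interval[of K N] dyadic_in_unit_interval[of "Suc K" N]
      by (intro SN_cell_integral_bound) auto
    also have "\<dots> \<le> 2 * G * \<delta>" using incr[OF True] \<open>G \<ge> 0\<close> by (simp add: mult_left_mono)
    finally show ?thesis .
  next
    case False
    then show ?thesis using floor \<open>G \<ge> 0\<close> \<open>\<delta> \<ge> 0\<close> by (simp add: SN_cell_integral_def)
  qed
  show ?thesis unfolding split using full partial by linarith
qed


lemma dyadic_floor_tendsto:
  assumes "t \<in> {0..1}"
  shows "(\<lambda>N. dyadic N (nat \<lfloor>t * 2^(N+1)\<rfloor>)) \<longlonglongrightarrow> t"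
proof (rule tendsto_sandwich[of "\<lambda>N. t - (1/2)^(Suc N)" _ _ "\<lambda>N. t"])
  have "(\<lambda>N. (1/2::real)^(Suc N)) \<longlonglongrightarrow> 0"
    by (intro LIMSEQ_Suc LIMSEQ_power_zero) simp
  then show "(\<lambda>N. t - (1/2)^(Suc N)) \<longlonglongrightarrow> t"
    using tendsto_diff[OF tendsto_const] by fastforce
  show "\<forall>\<^sub>F N in sequentially. t - (1/2)^(Suc N) \<le> dyadic N (nat \<lfloor>t * 2^(N+1)\<rfloor>)"
    using dyadic_floor[OF assms refl] by (auto simp: dyadic_Suc power_one_over algebra_simps)
  show "\<forall>\<^sub>F N in sequentially. dyadic N (nat \<lfloor>t * 2^(N+1)\<rfloor>) \<le> t"
    using dyadic_floor[OF assms refl] by simp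
qed simp

lemma holder_exponent_contraction:
  assumes "(2 + \<epsilon>) * \<alpha> > 1"
  shows "2 * (2 powr (-\<alpha>)) powr \<epsilon> * (2 powr (-\<alpha>))^2 < (1::real)"
proof -
  have "2 * (2 powr (-\<alpha>)) powr \<epsilon> * (2 powr (-\<alpha>))^2
      = (2::real) powr 1 * 2 powr (-\<alpha> * \<epsilon>) * (2 powr (-\<alpha>) * 2 powr (-\<alpha>))"
    by (simp add: powr_powr power2_eq_square)
  also have "\<dots> = 2 powr (1 - (2 + \<epsilon>) * \<alpha>)"
    by (simp only: powr_add[symmetric]) (simp add: algebra_simps)
  also have "\<dots> < 1" using assms by (intro powr_less_one) auto
  finally show ?thesis .
qed

lemma geometric_holder_sum_tendsto_zero:
  fixes q K :: real
  assumes "0 < q" "0 \<le> K" "2 * q powr \<epsilon> * q^2 < 1"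
  shows "(\<lambda>N. 2^N * (2 * C * (K * q^N) powr \<epsilon> * (K * q^N)^2)) \<longlonglongrightarrow> 0"
proof -
  define \<rho> where "\<rho> = 2 * q powr \<epsilon> * q^2"
  have eq: "2^N * (2 * C * (K * q^N) powr \<epsilon> * (K * q^N)^2) = 2 * C * K powr \<epsilon> * K^2 * \<rho>^N" for N
  proof -
    have "(q^N) powr \<epsilon> = (q powr \<epsilon>)^N"
      using assms(1) by (simp add: powr_realpow[symmetric] powr_powr powr_power mult.commute)
    moreover have "(q^N)^2 = (q^2)^N" by (metis power_mult mult.commute)
    ultimately have "2^N * ((q^N) powr \<epsilon> * (q^N)^2) = \<rho>^N"
      by (simp add: \<rho>_def power_mult_distrib)
    then show ?thesis using assms(1,2) by (simp add: powr_mult power_mult_distrib algebra_simps)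
  qed
  show ?thesis
    unfolding eq using assms unfolding \<rho>_def by (intro tendsto_mult_right_zero LIMSEQ_power_zero) auto
qed

lemma SN_change_of_variables_tendsto:
  fixes v :: "real \<Rightarrow> 'a::euclidean_space" and F :: "'a \<Rightarrow> real"
    and DF :: "'a \<Rightarrow> ('a \<Rightarrow>\<^sub>L real)" and D2F :: "'a \<Rightarrow> ('a \<Rightarrow>\<^sub>L ('a \<Rightarrow>\<^sub>L real))"
  assumes dF: "\<And>x. (F has_derivative blinfun_apply (DF x)) (at x)"
    and dDF: "\<And>x. (DF has_derivative blinfun_apply (D2F x)) (at x)"
    and holder: "\<And>y z. y \<in> v ` {0..1} \<Longrightarrow> dist y z < e \<Longrightarrow> norm (D2F y - D2F z) \<le> C * dist y z powr \<epsilon>"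
    and "e > 0" "C \<ge> 0" "\<epsilon> \<ge> 0"
    and v: "continuous_on {0..1} v"
    and incr: "\<And>N k. k < 2^(N+1) \<Longrightarrow> norm (v (dyadic N (Suc k)) - v (dyadic N k)) \<le> K * q^(N+1)"
    and "K \<ge> 0" "0 < q" "q < 1" "2 * q powr \<epsilon> * q^2 < 1"
    and t: "t \<in> {0..1}"
  shows "(\<lambda>N. int_dg (SN N (\<lambda>s. DF (v s))) (SN N v) t) \<longlonglongrightarrow> F (v t) - F (v 0)"
proof -
  have DF: "continuous_on UNIV DF" and F: "continuous_on UNIV F"
    using dF dDF by (meson continuous_at_imp_continuous_on has_derivative_continuous)+
  have compact: "compact (v ` {0..1})" using v by (intro compact_continuous_image) auto
  obtain G where G: "\<And>s. s \<in> {0..1} \<Longrightarrow> norm (DF (v s)) \<le> G"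
    using compact_imp_bounded[OF compact_continuous_image[OF continuous_on_subset[OF DF] compact]]
    by (force simp: bounded_iff)
  define \<delta> where "\<delta> N = K * q^(N+1)" for N
  define bound where "bound N = 2^(N+1) * (2 * C * \<delta> N powr \<epsilon> * \<delta> N^2) + 2 * G * \<delta> N
    + \<bar>F (v t) - F (v (dyadic N (nat \<lfloor>t * 2^(N+1)\<rfloor>)))\<bar>" for N
  have "(\<lambda>N. q^N) \<longlonglongrightarrow> 0" using \<open>0 < q\<close> \<open>q < 1\<close> by (intro LIMSEQ_power_zero) auto
  then have \<delta>: "\<delta> \<longlonglongrightarrow> 0" unfolding \<delta>_def using LIMSEQ_Suc tendsto_mult_right_zero by fastforce
  have grid: "(\<lambda>N. F (v (dyadic N (nat \<lfloor>t * 2^(N+1)\<rfloor>)))) \<longlonglongrightarrow> F (v t)"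
    using continuous_on_tendsto_compose[OF continuous_on_compose2[OF F v] dyadic_floor_tendsto[OF t] t]
      dyadic_floor[OF t refl] dyadic_in_unit_interval by auto
  have "(\<lambda>N. \<bar>F (v t) - F (v (dyadic N (nat \<lfloor>t * 2^(N+1)\<rfloor>)))\<bar>) \<longlonglongrightarrow> 0"
    using tendsto_rabs_zero[OF LIM_zero[OF grid]] by (simp add: abs_minus_commute)
  moreover have "(\<lambda>N. 2^(N+1) * (2 * C * \<delta> N powr \<epsilon> * \<delta> N^2)) \<longlonglongrightarrow> 0"
    using LIMSEQ_Suc[OF geometric_holder_sum_tendsto_zero[OF \<open>0 < q\<close> \<open>K \<ge> 0\<close> \<open>2 * q powr \<epsilon> * q^2 < 1\<close>, of C]]
    unfolding \<delta>_def by simp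
  ultimately have "bound \<longlonglongrightarrow> 0" unfolding bound_def
    by (intro tendsto_add_zero tendsto_mult_right_zero \<delta>)
  moreover have "\<forall>\<^sub>F N in sequentially.
      norm (int_dg (SN N (\<lambda>s. DF (v s))) (SN N v) t - (F (v t) - F (v 0))) \<le> bound N"
    using order_tendstoD(2)[OF \<delta> \<open>e > 0\<close>]
  proof eventually_elim
    case (elim N)
    show ?case unfolding real_norm_def bound_def
      using \<open>C \<ge> 0\<close> \<open>\<epsilon> \<ge> 0\<close> incr[of _ N, folded \<delta>_def]
      by (intro SN_change_of_variables_error[OF dF dDF holder _ _ G _ elim t refl]) auto
  qed
  ultimately show ?thesis by (subst Lim_null) (rule Lim_null_comparison)
qed

theorem mainTheorem14:
  fixes \<alpha> \<epsilon> :: real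
    and v :: "real \<Rightarrow> 'a::euclidean_space"
    and F :: "'a \<Rightarrow> real"
    and DF :: "'a \<Rightarrow> ('a \<Rightarrow>\<^sub>L real)"
  assumes "1/3 < \<alpha>" and "\<alpha> < 1"
    and "holderC \<alpha> v"
    and "\<epsilon> > 0" and "(2 + \<epsilon>) * \<alpha> > 1"
    and "C2eps \<epsilon> F DF"
  shows "\<forall>t\<in>{0..1}.
           (\<lambda>N. int_dg (SN N (\<lambda>s. DF (v s))) (SN N v) t) \<longlonglongrightarrow> F (v t) - F (v 0)"
proof
  fix t :: real assume t: "t \<in> {0..1}"
  obtain D2F where dF: "\<And>x. (F has_derivative blinfun_apply (DF x)) (at x)"
    and dDF: "\<And>x. (DF has_derivative blinfun_apply (D2F x)) (at x)"
    and loc: "\<And>x. \<exists>r>0. \<exists>C. \<forall>y\<in>ball x r. \<forall>z\<in>ball x r. norm (D2F y - D2F z) \<le> C * dist y z powr \<epsilon>"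
    using assms(6) unfolding C2eps_def by blast
  have v: "continuous_on {0..1} v" using assms(3) by (simp add: holderC_def)
  then have "compact (v ` {0..1})" by (intro compact_continuous_image) auto
  then obtain e C where "e > 0" "C \<ge> 0"
    and holder: "\<And>y z. y \<in> v ` {0..1} \<Longrightarrow> dist y z < e \<Longrightarrow> norm (D2F y - D2F z) \<le> C * dist y z powr \<epsilon>"
    using locally_holder_imp_uniformly_holder_on_compact[OF _ loc] by blast
  define q where "q = (2::real) powr (-\<alpha>)"
  have "0 < q" "q < 1" unfolding q_def using assms(1) by (auto intro: powr_less_one)
  obtain K where "K \<ge> 0"
    and incr: "\<And>p j. j < 2^p \<Longrightarrow> norm (v (real (Suc j) / 2^p) - v (real j / 2^p)) \<le> K * q^p"
    using holderC_dyadic_increments[OF _ assms(2,3)] assms(1) unfolding q_def by auto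
  have "norm (v (dyadic N (Suc k)) - v (dyadic N k)) \<le> K * q^(N+1)" if "k < 2^(N+1)" for N k
    using incr[OF that] by (simp add: dyadic_def)
  from SN_change_of_variables_tendsto[OF dF dDF holder \<open>e > 0\<close> \<open>C \<ge> 0\<close> _ v this
      \<open>K \<ge> 0\<close> \<open>0 < q\<close> \<open>q < 1\<close> holder_exponent_contraction[OF assms(5), folded q_def] t]
  show "(\<lambda>N. int_dg (SN N (\<lambda>s. DF (v s))) (SN N v) t) \<longlonglongrightarrow> F (v t) - F (v 0)"
    using assms(4) by simp
qed

end
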